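(* Let $S$ be an inf-semilattice ordered Cu-semigroup and let $\alpha$ be an action of a finite group $G$ on $S$ by Cu-isomorphisms. Then the fixed-point set $S^\alpha:=\{x\in S:\alpha_g(x)=x\text{ for all }g\in G\}$ is a sub-Cu-semigroup of $S$. Moreover, if $S$ is weakly cancellative (respectively satisfies (O5), (O6), (O7)), then so is (respectively does) $S^\alpha$.
   Context: A Cu-semigroup is a positively ordered commutative monoid satisfying (O1)–(O4): increasing sequences have suprema; each element is the supremum of a $\ll$-increasing sequence; $x'\ll x,y'\ll y\Rightarrow x'+y'\ll x+y$; suprema of increasing sequences are additive. $x\ll y$: whenever $y\le\sup z_n$ for increasing $(z_n)$, $x\le z_m$ for some $m$. A Cu-isomorphism is a bijective monoid map which together with its inverse preserves order, suprema of increasing sequences and $\ll$. Inf-semilattice ordered: any two elements have an infimum $x\wedge y$ and $(x+z)\wedge(y+z)=(x\wedge y)+z$ for all $x,y,z$. Sub-Cu-semigroup: a submonoid that is a Cu-semigroup with the inherited order such that the inclusion preserves order, suprema of increasing sequences and $\ll$. Weakly cancellative: $x+z\ll y+z$ implies $x\ll y$. (O5): if $x+y\le z$, $x'\ll x$, $y'\ll y$ then some $c$ has $y'\ll c$ and $x'+c\le z\le x+c$. (O6): if $x'\ll x\le y+z$ then some $v,w$ have $v\le x,y$, $w\le x,z$, $x'\le v+w$. (O7): if $x'\ll x\le w$, $y'\ll y\le w$ then some $z$ has $x',y'\ll z\le w,x+y$. *)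

theory Defs
  imports "HOL-Algebra.Group"
begin

text \<open>All notions are relativised to a subset A of an ambient positively ordered
commutative monoid (a type of class ordered_comm_monoid_add), with the inherited
order and addition.  The ambient Cu-semigroup S is A = UNIV.\<close>

definition incr_seq :: "(nat \<Rightarrow> 'a::order) \<Rightarrow> bool" where
  "incr_seq z \<longleftrightarrow> (\<forall>n. z n \<le> z (Suc n))"

definition is_sup_on :: "'a::order set \<Rightarrow> (nat \<Rightarrow> 'a) \<Rightarrow> 'a \<Rightarrow> bool" where
  "is_sup_on A z s \<longleftrightarrow> s \<in> A \<and> (\<forall>n. z n \<le> s) \<and>
     (\<forall>u\<in>A. (\<forall>n. z n \<le> u) \<longrightarrow> s \<le> u)"

definition ll_on :: "'a::order set \<Rightarrow> 'a \<Rightarrow> 'a \<Rightarrow> bool" where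
  "ll_on A x y \<longleftrightarrow> (\<forall>z s. (\<forall>n. z n \<in> A) \<longrightarrow> incr_seq z \<longrightarrow> is_sup_on A z s \<longrightarrow>
      y \<le> s \<longrightarrow> (\<exists>m. x \<le> z m))"

definition submonoid_on :: "'a::ordered_comm_monoid_add set \<Rightarrow> bool" where
  "submonoid_on A \<longleftrightarrow> 0 \<in> A \<and> (\<forall>x\<in>A. \<forall>y\<in>A. x + y \<in> A)"

definition Cu_on :: "'a::ordered_comm_monoid_add set \<Rightarrow> bool" where
  "Cu_on A \<longleftrightarrow> submonoid_on A \<and> (\<forall>x\<in>A. 0 \<le> x) \<and>
    \<comment> \<open>(O1)\<close>
    (\<forall>z. (\<forall>n. z n \<in> A) \<longrightarrow> incr_seq z \<longrightarrow> (\<exists>s. is_sup_on A z s)) \<and>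
    \<comment> \<open>(O2)\<close>
    (\<forall>x\<in>A. \<exists>z. (\<forall>n. z n \<in> A) \<and> (\<forall>n. ll_on A (z n) (z (Suc n))) \<and> is_sup_on A z x) \<and>
    \<comment> \<open>(O3)\<close>
    (\<forall>x'\<in>A. \<forall>x\<in>A. \<forall>y'\<in>A. \<forall>y\<in>A. ll_on A x' x \<longrightarrow> ll_on A y' y \<longrightarrow> ll_on A (x' + y') (x + y)) \<and>
    \<comment> \<open>(O4)\<close>
    (\<forall>a b s t. (\<forall>n. a n \<in> A) \<longrightarrow> (\<forall>n. b n \<in> A) \<longrightarrow> incr_seq a \<longrightarrow> incr_seq b \<longrightarrow>
       is_sup_on A a s \<longrightarrow> is_sup_on A b t \<longrightarrow> is_sup_on A (\<lambda>n. a n + b n) (s + t))"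

definition sub_Cu :: "'a::ordered_comm_monoid_add set \<Rightarrow> bool" where
  "sub_Cu T \<longleftrightarrow> submonoid_on T \<and> Cu_on T \<and>
    (\<forall>z s. (\<forall>n. z n \<in> T) \<longrightarrow> incr_seq z \<longrightarrow> is_sup_on T z s \<longrightarrow> is_sup_on UNIV z s) \<and>
    (\<forall>x\<in>T. \<forall>y\<in>T. ll_on T x y \<longrightarrow> ll_on UNIV x y)"

definition is_inf_on :: "'a::order set \<Rightarrow> 'a \<Rightarrow> 'a \<Rightarrow> 'a \<Rightarrow> bool" where
  "is_inf_on A x y m \<longleftrightarrow> m \<in> A \<and> m \<le> x \<and> m \<le> y \<and> (\<forall>u\<in>A. u \<le> x \<longrightarrow> u \<le> y \<longrightarrow> u \<le> m)"

definition inf_semilattice_ordered_on :: "'a::ordered_comm_monoid_add set \<Rightarrow> bool" where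
  "inf_semilattice_ordered_on A \<longleftrightarrow>
     (\<forall>x\<in>A. \<forall>y\<in>A. \<exists>m. is_inf_on A x y m) \<and>
     (\<forall>x\<in>A. \<forall>y\<in>A. \<forall>z\<in>A. \<forall>m. is_inf_on A x y m \<longrightarrow> is_inf_on A (x + z) (y + z) (m + z))"

definition Cu_iso :: "('a::ordered_comm_monoid_add \<Rightarrow> 'a) \<Rightarrow> bool" where
  "Cu_iso f \<longleftrightarrow> bij f \<and> f 0 = 0 \<and> (\<forall>x y. f (x + y) = f x + f y) \<and>
     (\<forall>x y. x \<le> y \<longleftrightarrow> f x \<le> f y) \<and>
     (\<forall>z s. incr_seq z \<longrightarrow> is_sup_on UNIV z s \<longrightarrow> is_sup_on UNIV (f \<circ> z) (f s)) \<and>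
     (\<forall>z s. incr_seq z \<longrightarrow> is_sup_on UNIV z s \<longrightarrow> is_sup_on UNIV (inv_into UNIV f \<circ> z) (inv_into UNIV f s)) \<and>
     (\<forall>x y. ll_on UNIV x y \<longrightarrow> ll_on UNIV (f x) (f y)) \<and>
     (\<forall>x y. ll_on UNIV x y \<longrightarrow> ll_on UNIV (inv_into UNIV f x) (inv_into UNIV f y))"

definition weakly_cancellative_on :: "'a::ordered_comm_monoid_add set \<Rightarrow> bool" where
  "weakly_cancellative_on A \<longleftrightarrow>
     (\<forall>x\<in>A. \<forall>y\<in>A. \<forall>z\<in>A. ll_on A (x + z) (y + z) \<longrightarrow> ll_on A x y)"

definition O5_on :: "'a::ordered_comm_monoid_add set \<Rightarrow> bool" where
  "O5_on A \<longleftrightarrow> (\<forall>x\<in>A. \<forall>y\<in>A. \<forall>z\<in>A. \<forall>x'\<in>A. \<forall>y'\<in>A.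
     x + y \<le> z \<longrightarrow> ll_on A x' x \<longrightarrow> ll_on A y' y \<longrightarrow>
     (\<exists>c\<in>A. ll_on A y' c \<and> x' + c \<le> z \<and> z \<le> x + c))"

definition O6_on :: "'a::ordered_comm_monoid_add set \<Rightarrow> bool" where
  "O6_on A \<longleftrightarrow> (\<forall>x'\<in>A. \<forall>x\<in>A. \<forall>y\<in>A. \<forall>z\<in>A.
     ll_on A x' x \<longrightarrow> x \<le> y + z \<longrightarrow>
     (\<exists>v\<in>A. \<exists>w\<in>A. v \<le> x \<and> v \<le> y \<and> w \<le> x \<and> w \<le> z \<and> x' \<le> v + w))"

definition O7_on :: "'a::ordered_comm_monoid_add set \<Rightarrow> bool" where
  "O7_on A \<longleftrightarrow> (\<forall>x'\<in>A. \<forall>x\<in>A. \<forall>y'\<in>A. \<forall>y\<in>A. \<forall>w\<in>A.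
     ll_on A x' x \<longrightarrow> x \<le> w \<longrightarrow> ll_on A y' y \<longrightarrow> y \<le> w \<longrightarrow>
     (\<exists>z\<in>A. ll_on A x' z \<and> ll_on A y' z \<and> z \<le> w \<and> z \<le> x + y))"

definition fixed_points :: "('g, 'm) monoid_scheme \<Rightarrow> ('g \<Rightarrow> 'a \<Rightarrow> 'a) \<Rightarrow> 'a set" where
  "fixed_points G \<alpha> = {x. \<forall>g\<in>carrier G. \<alpha> g x = x}"

end

theory Submission
  imports Defs
begin

text \<open>For \<open>c \<in> S\<close> let \<open>M c\<close> (\<open>orbit_inf c\<close> below) be the infimum of the finite orbit \<open>{\<alpha>\<^sub>g c}\<close>; it is the
  largest fixed point below \<open>c\<close>. Suprema of increasing sequences of fixed points are fixed, so
  \<open>S\<^sup>\<alpha>\<close> computes suprema as \<open>S\<close> does. The substantial point is that \<open>x \<ll> y\<close> in \<open>S\<^sup>\<alpha>\<close>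
  implies \<open>x \<ll> y\<close> in \<open>S\<close>: if \<open>y \<le> sup z\<^sub>n\<close>, every \<open>y\<^sub>0 \<ll> y\<close> lies below some \<open>\<alpha>\<^sub>g (z\<^sub>m)\<close>
  for each \<open>g\<close>, hence, \<open>G\<close> being finite, below \<open>M (z\<^sub>m)\<close> for a single \<open>m\<close>; so \<open>y \<le> sup M (z\<^sub>n)\<close>,
  a supremum taken inside \<open>S\<^sup>\<alpha>\<close>. The same estimate turns a \<open>\<ll>\<close>-approximation of a fixed
  element into a fixed one, giving (O2). (O5) and (O7) transfer by replacing the witness \<open>c\<close>
  found in \<open>S\<close> with \<open>M c\<close>, and (O6) by using the (fixed) infima \<open>x \<and> y\<close>, \<open>x \<and> z\<close>.\<close>

lemma ll_on_mono: "ll_on A x y \<Longrightarrow> x' \<le> x \<Longrightarrow> y \<le> y' \<Longrightarrow> ll_on A x' y'"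
  unfolding ll_on_def by (meson order_trans)

lemma incr_seq_mono: "incr_seq z \<Longrightarrow> m \<le> n \<Longrightarrow> z m \<le> z n"
  unfolding incr_seq_def by (rule lift_Suc_mono_le) auto

lemma is_sup_on_unique: "is_sup_on A z s \<Longrightarrow> is_sup_on A z t \<Longrightarrow> s = t"
  unfolding is_sup_on_def by (meson order_antisym)

lemma ll_on_imp_le:
  assumes "y \<in> A" and "ll_on A x y"
  shows "x \<le> y"
proof -
  have "incr_seq (\<lambda>_. y)" and "is_sup_on A (\<lambda>_. y) y"
    using \<open>y \<in> A\<close> unfolding incr_seq_def is_sup_on_def by auto
  then show ?thesis using assms unfolding ll_on_def by auto
qed

lemma ll_chain_ll_sup:
  assumes "\<forall>n. ll_on A (z n) (z (Suc n))" and "is_sup_on A z y"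
  shows "ll_on A (z n) y"
  using assms ll_on_mono unfolding is_sup_on_def by blast

lemma ll_chain_incr_seq:
  assumes "\<forall>n. z n \<in> A" and "\<forall>n. ll_on A (z n) (z (Suc n))"
  shows "incr_seq z"
  using assms ll_on_imp_le unfolding incr_seq_def by blast

text \<open>The subsequence jumps ahead until \<open>u\<close> has overtaken the next term of \<open>y\<close>.\<close>
lemma ll_chain_subseq_of_cofinal_below:
  assumes ll: "\<forall>n. ll_on A (y n) (y (Suc n))" and y_incr: "incr_seq y"
    and sup: "is_sup_on A y s"
    and u_incr: "incr_seq u" and u_below: "\<forall>n. u n \<le> y n" and cofinal: "\<forall>j. \<exists>m. y j \<le> u m"
  shows "\<exists>\<phi>. (\<forall>k. ll_on A (u (\<phi> k)) (u (\<phi> (Suc k)))) \<and> is_sup_on A (u \<circ> \<phi>) s"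
proof -
  obtain \<psi> where \<psi>: "\<And>j. y j \<le> u (\<psi> j)" using cofinal by metis
  define \<phi> where "\<phi> = rec_nat 0 (\<lambda>_ p. max (\<psi> (Suc p)) (Suc p))"
  have \<phi>_Suc: "\<phi> (Suc k) = max (\<psi> (Suc (\<phi> k))) (Suc (\<phi> k))" for k
    by (simp add: \<phi>_def)
  have \<phi>_ge: "k \<le> \<phi> k" for k
    by (induction k) (auto simp: \<phi>_Suc)
  have catch_up: "y (Suc (\<phi> k)) \<le> u (\<phi> (Suc k))" for k
    using \<psi>[of "Suc (\<phi> k)"] incr_seq_mono[OF u_incr, of "\<psi> (Suc (\<phi> k))" "\<phi> (Suc k)"]
    by (simp add: \<phi>_Suc)
  have chain: "ll_on A (u (\<phi> k)) (u (\<phi> (Suc k)))" for k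
    using ll_on_mono[OF ll[rule_format, of "\<phi> k"] u_below[rule_format] catch_up] .
  have "is_sup_on A (u \<circ> \<phi>) s"
    unfolding is_sup_on_def
  proof (intro conjI allI ballI impI)
    show "s \<in> A" using sup unfolding is_sup_on_def by blast
  next
    fix n show "(u \<circ> \<phi>) n \<le> s"
      using u_below sup unfolding is_sup_on_def by (auto intro: order_trans)
  next
    fix v assume "v \<in> A" and v: "\<forall>n. (u \<circ> \<phi>) n \<le> v"
    have "y k \<le> v" for k
    proof -
      have "y k \<le> y (Suc (\<phi> k))" using incr_seq_mono[OF y_incr] \<phi>_ge le_SucI by blast
      also have "\<dots> \<le> u (\<phi> (Suc k))" by (rule catch_up)
      also have "\<dots> \<le> v" using v by simp
      finally show ?thesis .
    qed
    then show "s \<le> v" using sup \<open>v \<in> A\<close> unfolding is_sup_on_def by blast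
  qed
  then show ?thesis using chain by blast
qed

lemma inf_semilattice_ordered_finite_inf:
  fixes f :: "'i \<Rightarrow> 'a::ordered_comm_monoid_add"
  assumes inf: "inf_semilattice_ordered_on (UNIV::'a set)"
    and "finite F" "F \<noteq> {}"
  shows "\<exists>m. (\<forall>i\<in>F. m \<le> f i) \<and> (\<forall>b u. (\<forall>i\<in>F. u \<le> f i + b) \<longrightarrow> u \<le> m + b)"
  using assms(2,3)
proof (induction F rule: finite_ne_induct)
  case (singleton i)
  then show ?case by auto
next
  case (insert j F)
  then obtain m where m_le: "\<forall>i\<in>F. m \<le> f i"
    and m_greatest: "\<forall>b u. (\<forall>i\<in>F. u \<le> f i + b) \<longrightarrow> u \<le> m + b" by blast
  from inf obtain mj where mj: "is_inf_on UNIV m (f j) mj"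
    unfolding inf_semilattice_ordered_on_def by blast
  have mj_add: "is_inf_on UNIV (m + b) (f j + b) (mj + b)" for b
    using inf mj unfolding inf_semilattice_ordered_on_def by blast
  show ?case
  proof (intro exI conjI allI impI ballI)
    fix i assume "i \<in> insert j F"
    then show "mj \<le> f i" using mj m_le unfolding is_inf_on_def by (auto intro: order_trans)
  next
    fix b u assume u: "\<forall>i\<in>insert j F. u \<le> f i + b"
    then have "u \<le> m + b" and "u \<le> f j + b" using m_greatest by auto
    then show "u \<le> mj + b" using mj_add[of b] unfolding is_inf_on_def by auto
  qed
qed

locale finite_Cu_action =
  fixes G :: "('g, 'm) monoid_scheme" and \<alpha> :: "'g \<Rightarrow> 'a::ordered_comm_monoid_add \<Rightarrow> 'a"
  assumes S_Cu: "Cu_on (UNIV :: 'a set)"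
    and S_inf: "inf_semilattice_ordered_on (UNIV :: 'a set)"
    and G: "group G" and G_fin: "finite (carrier G)"
    and act_iso: "\<forall>g\<in>carrier G. Cu_iso (\<alpha> g)"
    and act_one: "\<alpha> \<one>\<^bsub>G\<^esub> = id"
    and act_mult: "\<forall>g\<in>carrier G. \<forall>h\<in>carrier G. \<alpha> (g \<otimes>\<^bsub>G\<^esub> h) = \<alpha> g \<circ> \<alpha> h"
begin

abbreviation Fix :: "'a set" where
  "Fix \<equiv> fixed_points G \<alpha>"

lemma fixed_points_iff: "x \<in> Fix \<longleftrightarrow> (\<forall>g\<in>carrier G. \<alpha> g x = x)"
  unfolding fixed_points_def by simp

lemma S_O1: "incr_seq z \<Longrightarrow> \<exists>s. is_sup_on UNIV z (s::'a)"
  using S_Cu unfolding Cu_on_def by blast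

lemma S_O2: "\<exists>z. (\<forall>n. ll_on UNIV (z n) (z (Suc n))) \<and> is_sup_on UNIV z (x::'a)"
  using S_Cu unfolding Cu_on_def by blast

lemma S_O3: "ll_on UNIV (x'::'a) x \<Longrightarrow> ll_on UNIV y' y \<Longrightarrow> ll_on UNIV (x' + y') (x + y)"
  using S_Cu unfolding Cu_on_def by blast

lemma S_O4:
  "incr_seq a \<Longrightarrow> incr_seq b \<Longrightarrow> is_sup_on UNIV a (s::'a) \<Longrightarrow> is_sup_on UNIV b t
    \<Longrightarrow> is_sup_on UNIV (\<lambda>n. a n + b n) (s + t)"
  using S_Cu unfolding Cu_on_def by blast

lemma action_le_iff: "g \<in> carrier G \<Longrightarrow> \<alpha> g x \<le> \<alpha> g y \<longleftrightarrow> x \<le> y"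
  using act_iso unfolding Cu_iso_def by (metis (no_types, lifting))

lemma action_add: "g \<in> carrier G \<Longrightarrow> \<alpha> g (x + y) = \<alpha> g x + \<alpha> g y"
  using act_iso unfolding Cu_iso_def by (metis (no_types, lifting))

lemma action_zero: "g \<in> carrier G \<Longrightarrow> \<alpha> g 0 = 0"
  using act_iso unfolding Cu_iso_def by (metis (no_types, lifting))

lemma action_sup:
  "g \<in> carrier G \<Longrightarrow> incr_seq z \<Longrightarrow> is_sup_on UNIV z s \<Longrightarrow> is_sup_on UNIV (\<alpha> g \<circ> z) (\<alpha> g s)"
  using act_iso unfolding Cu_iso_def by (metis (no_types, lifting))

lemma action_apply_one: "\<alpha> \<one>\<^bsub>G\<^esub> x = x"
  using act_one by simp

lemma action_apply_inv: "g \<in> carrier G \<Longrightarrow> \<alpha> g (\<alpha> (inv\<^bsub>G\<^esub> g) x) = x"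
  using act_mult action_apply_one G by (metis comp_apply group.inv_closed group.r_inv)

lemma fixed_if_action_le:
  assumes below: "\<And>g. g \<in> carrier G \<Longrightarrow> \<alpha> g x \<le> x"
  shows "x \<in> Fix"
  unfolding fixed_points_iff
proof
  fix g assume g: "g \<in> carrier G"
  have "x = \<alpha> g (\<alpha> (inv\<^bsub>G\<^esub> g) x)" using action_apply_inv[OF g] by simp
  also have "\<dots> \<le> \<alpha> g x"
    using below G g action_le_iff[OF g] by (simp add: group.inv_closed)
  finally show "\<alpha> g x = x" using below[OF g] by (rule antisym[rotated])
qed

lemma submonoid_on_fixed_points: "submonoid_on Fix"
  unfolding submonoid_on_def using action_zero action_add by (auto simp: fixed_points_iff)

lemma inf_of_fixed_is_fixed:
  assumes "x \<in> Fix" "y \<in> Fix" and m: "is_inf_on UNIV x y m"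
  shows "m \<in> Fix"
proof (rule fixed_if_action_le)
  fix g assume g: "g \<in> carrier G"
  have "\<alpha> g m \<le> x" and "\<alpha> g m \<le> y"
    using assms action_le_iff[OF g] g unfolding fixed_points_iff is_inf_on_def by metis+
  then show "\<alpha> g m \<le> m" using m unfolding is_inf_on_def by blast
qed

lemma sup_of_fixed_is_fixed:
  assumes "\<forall>n. z n \<in> Fix" "incr_seq z" "is_sup_on UNIV z s"
  shows "s \<in> Fix"
  unfolding fixed_points_iff
proof
  fix g assume g: "g \<in> carrier G"
  have "\<alpha> g \<circ> z = z" using assms(1) g unfolding fixed_points_iff by auto
  then show "\<alpha> g s = s"
    using action_sup[OF g assms(2,3)] is_sup_on_unique assms(3) by metis
qed

lemma is_sup_on_fixed_points_iff:
  assumes "\<forall>n. z n \<in> Fix" "incr_seq z"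
  shows "is_sup_on Fix z s \<longleftrightarrow> is_sup_on UNIV z s"
proof -
  obtain t where t: "is_sup_on UNIV z t" using S_O1 assms(2) by blast
  then have "is_sup_on Fix z t"
    using sup_of_fixed_is_fixed assms unfolding is_sup_on_def by blast
  then show ?thesis using t is_sup_on_unique by metis
qed

lemma ll_on_fixed_points_if_ll: "ll_on UNIV x y \<Longrightarrow> ll_on Fix x y"
  unfolding ll_on_def using is_sup_on_fixed_points_iff by blast

text \<open>The second clause, stability under adding \<open>b\<close>, is where the inf-semilattice ordering
  enters; it is needed only for (O5).\<close>
definition orbit_inf :: "'a \<Rightarrow> 'a" where
  "orbit_inf c = (SOME m. (\<forall>g\<in>carrier G. m \<le> \<alpha> g c) \<and>
      (\<forall>b u. (\<forall>g\<in>carrier G. u \<le> \<alpha> g c + b) \<longrightarrow> u \<le> m + b))"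

lemma orbit_inf:
  "(\<forall>g\<in>carrier G. orbit_inf c \<le> \<alpha> g c) \<and>
   (\<forall>b u. (\<forall>g\<in>carrier G. u \<le> \<alpha> g c + b) \<longrightarrow> u \<le> orbit_inf c + b)"
proof -
  have "carrier G \<noteq> {}" using G by (auto dest: group.is_monoid monoid.one_closed)
  then show ?thesis
    unfolding orbit_inf_def
    by (rule someI_ex[OF inf_semilattice_ordered_finite_inf[OF S_inf G_fin]])
qed

lemma orbit_inf_le_action: "g \<in> carrier G \<Longrightarrow> orbit_inf c \<le> \<alpha> g c"
  using orbit_inf by blast

lemma orbit_inf_le: "orbit_inf c \<le> c"
  using orbit_inf_le_action[of "\<one>\<^bsub>G\<^esub>"] G action_apply_one
  by (simp add: group.is_monoid monoid.one_closed)

lemma orbit_inf_greatest_add: "(\<And>g. g \<in> carrier G \<Longrightarrow> u \<le> \<alpha> g c + b) \<Longrightarrow> u \<le> orbit_inf c + b"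
  using orbit_inf by blast

lemma orbit_inf_greatest: "(\<And>g. g \<in> carrier G \<Longrightarrow> u \<le> \<alpha> g c) \<Longrightarrow> u \<le> orbit_inf c"
  using orbit_inf_greatest_add[of u c 0] by simp

lemma orbit_inf_mono: "c \<le> d \<Longrightarrow> orbit_inf c \<le> orbit_inf d"
  by (rule orbit_inf_greatest) (meson orbit_inf_le_action action_le_iff order_trans)

lemma orbit_inf_fixed: "orbit_inf c \<in> Fix"
proof (rule fixed_if_action_le, rule orbit_inf_greatest)
  fix h k assume h: "h \<in> carrier G" and k: "k \<in> carrier G"
  have hk: "inv\<^bsub>G\<^esub> h \<otimes>\<^bsub>G\<^esub> k \<in> carrier G"
    using G h k by (simp add: group.inv_closed group.is_monoid monoid.m_closed)
  have "\<alpha> h (orbit_inf c) \<le> \<alpha> h (\<alpha> (inv\<^bsub>G\<^esub> h \<otimes>\<^bsub>G\<^esub> k) c)"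
    using action_le_iff[OF h] orbit_inf_le_action[OF hk] by blast
  also have "\<dots> = \<alpha> h (\<alpha> (inv\<^bsub>G\<^esub> h) (\<alpha> k c))"
    using act_mult G h k by (simp add: group.inv_closed)
  also have "\<dots> = \<alpha> k c" by (rule action_apply_inv[OF h])
  finally show "\<alpha> h (orbit_inf c) \<le> \<alpha> k c" .
qed

lemma fixed_le_orbit_inf: "y \<in> Fix \<Longrightarrow> y \<le> c \<Longrightarrow> y \<le> orbit_inf c"
  by (rule orbit_inf_greatest) (metis action_le_iff fixed_points_iff)

text \<open>The heart of the argument: G is finite, so finitely many indices, one for each \<open>\<alpha> g\<close>,
  have a common upper bound.\<close>
lemma ll_fixed_below_sup_le_orbit_inf:
  assumes z: "incr_seq z" and s: "is_sup_on UNIV z s" and y: "y \<in> Fix" "y \<le> s"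
    and y0: "ll_on UNIV y0 y"
  shows "\<exists>m. y0 \<le> orbit_inf (z m)"
proof -
  have "\<exists>m. y0 \<le> \<alpha> g (z m)" if g: "g \<in> carrier G" for g
  proof -
    have "is_sup_on UNIV (\<alpha> g \<circ> z) (\<alpha> g s)" using action_sup[OF g z s] .
    moreover have "incr_seq (\<alpha> g \<circ> z)"
      using z action_le_iff[OF g] unfolding incr_seq_def by simp
    moreover have "y \<le> \<alpha> g s" using y g action_le_iff[OF g] unfolding fixed_points_iff by metis
    ultimately show ?thesis using y0 unfolding ll_on_def by auto
  qed
  then obtain idx where idx: "\<And>g. g \<in> carrier G \<Longrightarrow> y0 \<le> \<alpha> g (z (idx g))" by metis
  define m where "m = Max (idx ` carrier G)"
  have "y0 \<le> orbit_inf (z m)"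
  proof (rule orbit_inf_greatest)
    fix g assume g: "g \<in> carrier G"
    have "z (idx g) \<le> z m"
      using incr_seq_mono[OF z] G_fin g unfolding m_def by simp
    then show "y0 \<le> \<alpha> g (z m)" using idx[OF g] action_le_iff[OF g] order_trans by blast
  qed
  then show ?thesis ..
qed

lemma ll_on_fixed_points_imp_ll:
  assumes "x \<in> Fix" "y \<in> Fix" and ll_fix: "ll_on Fix x y"
  shows "ll_on UNIV x y"
  unfolding ll_on_def
proof (intro allI impI)
  fix z s assume z: "incr_seq z" and s: "is_sup_on UNIV z s" and "y \<le> s"
  define w where "w n = orbit_inf (z n)" for n
  have w_fixed: "\<forall>n. w n \<in> Fix" unfolding w_def using orbit_inf_fixed by blast
  have w_incr: "incr_seq w" using z orbit_inf_mono unfolding w_def incr_seq_def by blast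
  obtain t where t: "is_sup_on UNIV w t" using S_O1 w_incr by blast
  obtain yk where yk: "\<forall>n. ll_on UNIV (yk n) (yk (Suc n))" "is_sup_on UNIV yk y"
    using S_O2 by blast
  have "yk k \<le> t" for k
  proof -
    obtain m where "yk k \<le> w m"
      using ll_fixed_below_sup_le_orbit_inf[OF z s \<open>y \<in> Fix\<close> \<open>y \<le> s\<close> ll_chain_ll_sup[OF yk]]
      unfolding w_def by blast
    then show ?thesis using t unfolding is_sup_on_def by (meson order_trans)
  qed
  then have "y \<le> t" using yk(2) unfolding is_sup_on_def by blast
  moreover have "is_sup_on Fix w t" using is_sup_on_fixed_points_iff[OF w_fixed w_incr] t by blast
  ultimately obtain m where "x \<le> w m" using ll_fix w_fixed w_incr unfolding ll_on_def by blast
  then show "\<exists>m. x \<le> z m" unfolding w_def using orbit_inf_le order_trans by blast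
qed

lemma ll_on_fixed_points_iff: "x \<in> Fix \<Longrightarrow> y \<in> Fix \<Longrightarrow> ll_on Fix x y \<longleftrightarrow> ll_on UNIV x y"
  using ll_on_fixed_points_imp_ll ll_on_fixed_points_if_ll by blast

lemma fixed_ll_chain:
  assumes y: "y \<in> Fix"
  obtains c where "\<forall>n. c n \<in> Fix" "\<forall>n. ll_on UNIV (c n) (c (Suc n))" "is_sup_on UNIV c y"
proof -
  obtain yk where yk: "\<forall>n. ll_on UNIV (yk n) (yk (Suc n))" "is_sup_on UNIV yk y"
    using S_O2 by blast
  have yk_incr: "incr_seq yk" using ll_chain_incr_seq yk(1) by blast
  define u where "u n = orbit_inf (yk n)" for n
  have "incr_seq u" using yk_incr orbit_inf_mono unfolding u_def incr_seq_def by blast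
  moreover have "\<forall>n. u n \<le> yk n" unfolding u_def using orbit_inf_le by blast
  moreover have "\<forall>j. \<exists>m. yk j \<le> u m"
    using ll_fixed_below_sup_le_orbit_inf[OF yk_incr yk(2) y order_refl ll_chain_ll_sup[OF yk]]
    unfolding u_def by blast
  ultimately obtain \<phi> where "\<forall>k. ll_on UNIV (u (\<phi> k)) (u (\<phi> (Suc k)))" "is_sup_on UNIV (u \<circ> \<phi>) y"
    using ll_chain_subseq_of_cofinal_below[OF yk(1) yk_incr yk(2)] by blast
  moreover have "\<forall>n. (u \<circ> \<phi>) n \<in> Fix" unfolding u_def using orbit_inf_fixed by simp
  ultimately show ?thesis using that[of "u \<circ> \<phi>"] by simp
qed

lemma fixed_ll_interpolate:
  assumes "y' \<in> Fix" "y \<in> Fix" "ll_on UNIV y' y"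
  obtains y'' where "y'' \<in> Fix" "ll_on UNIV y' y''" "ll_on UNIV y'' y"
proof -
  obtain c where c: "\<forall>n. c n \<in> Fix" "\<forall>n. ll_on UNIV (c n) (c (Suc n))" "is_sup_on UNIV c y"
    using fixed_ll_chain[OF assms(2)] by blast
  obtain m where "y' \<le> c m"
    using assms(3) c ll_chain_incr_seq[of c UNIV] unfolding ll_on_def by blast
  then have "ll_on UNIV y' (c (Suc m))" using ll_on_mono c(2) by blast
  moreover have "ll_on UNIV (c (Suc m)) y" using ll_chain_ll_sup[OF c(2,3)] .
  ultimately show ?thesis using that c(1) by blast
qed

lemma Cu_on_fixed_points: "Cu_on Fix"
  unfolding Cu_on_def
proof (intro conjI ballI allI impI)
  show "submonoid_on Fix" by (rule submonoid_on_fixed_points)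
next
  fix x :: 'a show "0 \<le> x" using S_Cu unfolding Cu_on_def by blast
next
  fix z assume "\<forall>n. z n \<in> Fix" and "incr_seq z"
  then show "\<exists>s. is_sup_on Fix z s" using S_O1 is_sup_on_fixed_points_iff by blast
next
  fix y assume "y \<in> Fix"
  then obtain c where c: "\<forall>n. c n \<in> Fix" "\<forall>n. ll_on UNIV (c n) (c (Suc n))" "is_sup_on UNIV c y"
    by (rule fixed_ll_chain)
  moreover have "incr_seq c" using c(2) ll_chain_incr_seq by blast
  ultimately show "\<exists>z. (\<forall>n. z n \<in> Fix) \<and> (\<forall>n. ll_on Fix (z n) (z (Suc n))) \<and> is_sup_on Fix z y"
    using is_sup_on_fixed_points_iff ll_on_fixed_points_if_ll by blast
next
  fix x' x y' y assume "x' \<in> Fix" "x \<in> Fix" "y' \<in> Fix" "y \<in> Fix" "ll_on Fix x' x" "ll_on Fix y' y"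
  then show "ll_on Fix (x' + y') (x + y)"
    using S_O3 ll_on_fixed_points_iff ll_on_fixed_points_if_ll by blast
next
  fix a b s t assume a: "\<forall>n. a n \<in> Fix" "incr_seq a" "is_sup_on Fix a s"
    and b: "\<forall>n. b n \<in> Fix" "incr_seq b" "is_sup_on Fix b t"
  have ab_fixed: "\<forall>n. a n + b n \<in> Fix"
    using a(1) b(1) submonoid_on_fixed_points unfolding submonoid_on_def by blast
  have ab_incr: "incr_seq (\<lambda>n. a n + b n)"
    using a(2) b(2) unfolding incr_seq_def by (simp add: add_mono)
  have "is_sup_on UNIV (\<lambda>n. a n + b n) (s + t)"
    using S_O4 a b is_sup_on_fixed_points_iff by blast
  then show "is_sup_on Fix (\<lambda>n. a n + b n) (s + t)"
    using is_sup_on_fixed_points_iff[OF ab_fixed ab_incr] by blast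
qed

lemma sub_Cu_fixed_points: "sub_Cu Fix"
  unfolding sub_Cu_def
  using submonoid_on_fixed_points Cu_on_fixed_points is_sup_on_fixed_points_iff
    ll_on_fixed_points_imp_ll
  by blast

lemma weakly_cancellative_on_fixed_points:
  assumes "weakly_cancellative_on (UNIV :: 'a set)"
  shows "weakly_cancellative_on Fix"
  unfolding weakly_cancellative_on_def
proof (intro ballI impI)
  fix x y z assume fixed: "x \<in> Fix" "y \<in> Fix" "z \<in> Fix" and ll: "ll_on Fix (x + z) (y + z)"
  have "x + z \<in> Fix" "y + z \<in> Fix"
    using fixed submonoid_on_fixed_points unfolding submonoid_on_def by blast+
  then have "ll_on UNIV (x + z) (y + z)" using ll ll_on_fixed_points_iff by blast
  then show "ll_on Fix x y"
    using assms ll_on_fixed_points_if_ll unfolding weakly_cancellative_on_def by blast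
qed

text \<open>Interpolating a fixed element first is what lets the \<open>\<ll>\<close>-relations survive the
  passage from the witness \<open>c\<close> to \<open>orbit_inf c\<close>.\<close>

lemma O5_on_fixed_points:
  assumes O5: "O5_on (UNIV :: 'a set)"
  shows "O5_on Fix"
  unfolding O5_on_def
proof (intro ballI impI)
  fix x y z x' y'
  assume fixed: "x \<in> Fix" "y \<in> Fix" "z \<in> Fix" "x' \<in> Fix" "y' \<in> Fix"
    and le: "x + y \<le> z" and ll_x: "ll_on Fix x' x" and ll_y: "ll_on Fix y' y"
  obtain y'' where y'': "y'' \<in> Fix" "ll_on UNIV y' y''" "ll_on UNIV y'' y"
    using fixed_ll_interpolate fixed(5,2) ll_y ll_on_fixed_points_iff by blast
  obtain c where c: "ll_on UNIV y'' c" "x' + c \<le> z" "z \<le> x + c"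
    using O5 le ll_x y''(3) fixed ll_on_fixed_points_iff unfolding O5_on_def by blast
  have "y'' \<le> orbit_inf c" using fixed_le_orbit_inf[OF y''(1)] ll_on_imp_le[OF _ c(1)] by blast
  then have "ll_on UNIV y' (orbit_inf c)" using ll_on_mono[OF y''(2) order_refl] by blast
  moreover have "x' + orbit_inf c \<le> z"
    using orbit_inf_le c(2) add_left_mono order_trans by blast
  moreover have "z \<le> x + orbit_inf c"
  proof -
    have "z \<le> \<alpha> g c + x" if g: "g \<in> carrier G" for g
      using action_le_iff[OF g] c(3) fixed g action_add[OF g]
      unfolding fixed_points_iff by (metis add.commute)
    then show ?thesis using orbit_inf_greatest_add by (metis add.commute)
  qed
  ultimately show "\<exists>c\<in>Fix. ll_on Fix y' c \<and> x' + c \<le> z \<and> z \<le> x + c"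
    using orbit_inf_fixed ll_on_fixed_points_if_ll by blast
qed

lemma O6_on_fixed_points:
  assumes O6: "O6_on (UNIV :: 'a set)"
  shows "O6_on Fix"
  unfolding O6_on_def
proof (intro ballI impI)
  fix x' x y z
  assume fixed: "x' \<in> Fix" "x \<in> Fix" "y \<in> Fix" "z \<in> Fix"
    and ll_x: "ll_on Fix x' x" and le: "x \<le> y + z"
  obtain v w where vw: "v \<le> x" "v \<le> y" "w \<le> x" "w \<le> z" "x' \<le> v + w"
    using O6 ll_x le fixed ll_on_fixed_points_iff unfolding O6_on_def by blast
  obtain m1 m2 where m1: "is_inf_on UNIV x y m1" and m2: "is_inf_on UNIV x z m2"
    using S_inf unfolding inf_semilattice_ordered_on_def by blast
  have "v \<le> m1" "w \<le> m2" using vw m1 m2 unfolding is_inf_on_def by blast+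
  then have "x' \<le> m1 + m2" using vw(5) add_mono order_trans by blast
  moreover have "m1 \<in> Fix" "m2 \<in> Fix" using inf_of_fixed_is_fixed fixed m1 m2 by blast+
  ultimately show "\<exists>v\<in>Fix. \<exists>w\<in>Fix. v \<le> x \<and> v \<le> y \<and> w \<le> x \<and> w \<le> z \<and> x' \<le> v + w"
    using m1 m2 unfolding is_inf_on_def by blast
qed

lemma O7_on_fixed_points:
  assumes O7: "O7_on (UNIV :: 'a set)"
  shows "O7_on Fix"
  unfolding O7_on_def
proof (intro ballI impI)
  fix x' x y' y w
  assume fixed: "x' \<in> Fix" "x \<in> Fix" "y' \<in> Fix" "y \<in> Fix" "w \<in> Fix"
    and ll_x: "ll_on Fix x' x" and "x \<le> w" and ll_y: "ll_on Fix y' y" and "y \<le> w"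
  obtain x'' where x'': "x'' \<in> Fix" "ll_on UNIV x' x''" "ll_on UNIV x'' x"
    using fixed_ll_interpolate fixed(1,2) ll_x ll_on_fixed_points_iff by blast
  obtain y'' where y'': "y'' \<in> Fix" "ll_on UNIV y' y''" "ll_on UNIV y'' y"
    using fixed_ll_interpolate fixed(3,4) ll_y ll_on_fixed_points_iff by blast
  obtain z where z: "ll_on UNIV x'' z" "ll_on UNIV y'' z" "z \<le> w" "z \<le> x + y"
    using O7 x''(3) y''(3) \<open>x \<le> w\<close> \<open>y \<le> w\<close> unfolding O7_on_def by blast
  have "x'' \<le> orbit_inf z" "y'' \<le> orbit_inf z"
    using fixed_le_orbit_inf x''(1) y''(1) ll_on_imp_le z(1,2) by blast+
  then have "ll_on UNIV x' (orbit_inf z)" "ll_on UNIV y' (orbit_inf z)"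
    using ll_on_mono x''(2) y''(2) by blast+
  moreover have "orbit_inf z \<le> w" "orbit_inf z \<le> x + y"
    using orbit_inf_le z(3,4) order_trans by blast+
  ultimately show "\<exists>z\<in>Fix. ll_on Fix x' z \<and> ll_on Fix y' z \<and> z \<le> w \<and> z \<le> x + y"
    using orbit_inf_fixed ll_on_fixed_points_if_ll by blast
qed

end

theorem lemma7p7:
  fixes G :: "('g, 'm) monoid_scheme" and \<alpha> :: "'g \<Rightarrow> 'a::ordered_comm_monoid_add \<Rightarrow> 'a"
  assumes S_Cu: "Cu_on (UNIV :: 'a set)"
    and S_inf: "inf_semilattice_ordered_on (UNIV :: 'a set)"
    and G: "group G" and G_fin: "finite (carrier G)"
    and act_iso: "\<forall>g\<in>carrier G. Cu_iso (\<alpha> g)"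
    and act_one: "\<alpha> \<one>\<^bsub>G\<^esub> = id"
    and act_mult: "\<forall>g\<in>carrier G. \<forall>h\<in>carrier G. \<alpha> (g \<otimes>\<^bsub>G\<^esub> h) = \<alpha> g \<circ> \<alpha> h"
  shows "sub_Cu (fixed_points G \<alpha>) \<and>
    (weakly_cancellative_on (UNIV :: 'a set) \<longrightarrow> weakly_cancellative_on (fixed_points G \<alpha>)) \<and>
    (O5_on (UNIV :: 'a set) \<longrightarrow> O5_on (fixed_points G \<alpha>)) \<and>
    (O6_on (UNIV :: 'a set) \<longrightarrow> O6_on (fixed_points G \<alpha>)) \<and>
    (O7_on (UNIV :: 'a set) \<longrightarrow> O7_on (fixed_points G \<alpha>))"
proof -
  interpret finite_Cu_action G \<alpha>
    using assms unfolding finite_Cu_action_def by blast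
  show ?thesis
    using sub_Cu_fixed_points weakly_cancellative_on_fixed_points
      O5_on_fixed_points O6_on_fixed_points O7_on_fixed_points
    by blast
qed

end
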